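(* Assume the standing setup below with $0<T_2<T_1<1$ and $\sum_m mQ(m)>0$. Then: (i) for every $q\in[0,1]$ with $\psi(q)\in(0,1)$ (where $\psi<1$), $\psi$ is differentiable at $q$ with $\frac{d\psi}{dq}>0$; and (ii) $\frac{d\tilde\nu}{dq}<0$ for all $q\in[0,1]$. Here $q=\frac{1}{\langle k\rangle}\sum_{k\ge1}k\phi(k)P(k)$ for a training profile $\phi:\{1,2,\dots\}\to[0,1]$, so in particular for fixed $T_2$ the outbreak constraint $1-\psi\le\gamma$ is equivalent to a lower bound on the linear functional $\frac{1}{\langle k\rangle}\sum_k k\phi(k)P(k)$.
   Context: Standing setup. $P$ is a probability distribution on $\{0,1,\dots,k_{\max}\}$ with mean $\langle k\rangle=\sum_k kP(k)>0$; $Q(k)=(k+1)P(k+1)/\langle k\rangle$ for $k\ge0$. Fix $T_1,T_2\in(0,1)$. For $q\in[0,1]$ set $P_q(k_1,k_2)=\binom{k_1+k_2}{k_2}q^{k_2}(1-q)^{k_1}P(k_1+k_2)$ and $Q_q(k_1,k_2)=\binom{k_1+k_2}{k_2}q^{k_2}(1-q)^{k_1}Q(k_1+k_2)$ (with $0^0=1$). Define $\tilde\nu(q)=T_1\sum_{k_1,k_2}k_1Q_q(k_1,k_2)+T_2\sum_{k_1,k_2}k_2Q_q(k_1,k_2)$. For $u\in[0,1]$ let $F_q(u)=\sum_{k_1,k_2}(1+(u-1)T_1)^{k_1}(1+(u-1)T_2)^{k_2}Q_q(k_1,k_2)$ and $G_q(u)=\sum_{k_1,k_2}(1+(u-1)T_1)^{k_1}(1+(u-1)T_2)^{k_2}P_q(k_1,k_2)$.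 Let $u^*(q)$ be the smallest solution in $[0,1]$ of $u=F_q(u)$ and $\psi(q)=G_q(u^*(q))$. *)

theory Defs
  imports "HOL-Analysis.Analysis"
begin

text \<open>P is a degree distribution on {0..kmax}, given as a function nat => real
  (with P k = 0 for k > kmax). All double sums over (k1,k2) range over
  {..kmax} x {..kmax}, which contains the whole (finite) support.\<close>

definition meandeg :: "(nat \<Rightarrow> real) \<Rightarrow> nat \<Rightarrow> real" where
  "meandeg P kmax = (\<Sum>k\<le>kmax. real k * P k)"

definition Qd :: "(nat \<Rightarrow> real) \<Rightarrow> nat \<Rightarrow> nat \<Rightarrow> real" where
  "Qd P kmax k = real (k + 1) * P (k + 1) / meandeg P kmax"

definition Pq :: "(nat \<Rightarrow> real) \<Rightarrow> real \<Rightarrow> nat \<Rightarrow> nat \<Rightarrow> real" where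
  "Pq P q k1 k2 = real ((k1 + k2) choose k2) * q ^ k2 * (1 - q) ^ k1 * P (k1 + k2)"

definition Qq :: "(nat \<Rightarrow> real) \<Rightarrow> nat \<Rightarrow> real \<Rightarrow> nat \<Rightarrow> nat \<Rightarrow> real" where
  "Qq P kmax q k1 k2 = real ((k1 + k2) choose k2) * q ^ k2 * (1 - q) ^ k1 * Qd P kmax (k1 + k2)"

definition nu_tilde :: "(nat \<Rightarrow> real) \<Rightarrow> nat \<Rightarrow> real \<Rightarrow> real \<Rightarrow> real \<Rightarrow> real" where
  "nu_tilde P kmax T1 T2 q =
     T1 * (\<Sum>k1\<le>kmax. \<Sum>k2\<le>kmax. real k1 * Qq P kmax q k1 k2)
   + T2 * (\<Sum>k1\<le>kmax. \<Sum>k2\<le>kmax. real k2 * Qq P kmax q k1 k2)"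

definition Fq :: "(nat \<Rightarrow> real) \<Rightarrow> nat \<Rightarrow> real \<Rightarrow> real \<Rightarrow> real \<Rightarrow> real \<Rightarrow> real" where
  "Fq P kmax T1 T2 q u =
     (\<Sum>k1\<le>kmax. \<Sum>k2\<le>kmax. (1 + (u - 1) * T1) ^ k1 * (1 + (u - 1) * T2) ^ k2 * Qq P kmax q k1 k2)"

definition Gq :: "(nat \<Rightarrow> real) \<Rightarrow> nat \<Rightarrow> real \<Rightarrow> real \<Rightarrow> real \<Rightarrow> real \<Rightarrow> real" where
  "Gq P kmax T1 T2 q u =
     (\<Sum>k1\<le>kmax. \<Sum>k2\<le>kmax. (1 + (u - 1) * T1) ^ k1 * (1 + (u - 1) * T2) ^ k2 * Pq P q k1 k2)"

definition ustar :: "(nat \<Rightarrow> real) \<Rightarrow> nat \<Rightarrow> real \<Rightarrow> real \<Rightarrow> real \<Rightarrow> real" where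
  "ustar P kmax T1 T2 q = Inf {u \<in> {0..1}. u = Fq P kmax T1 T2 q u}"

definition psi :: "(nat \<Rightarrow> real) \<Rightarrow> nat \<Rightarrow> real \<Rightarrow> real \<Rightarrow> real \<Rightarrow> real" where
  "psi P kmax T1 T2 q = Gq P kmax T1 T2 q (ustar P kmax T1 T2 q)"

end

theory Submission
  imports Defs "HOL-Complex_Analysis.Conformal_Mappings"
begin

(* Splitting each edge into a type-1 (untrained, transmissibility T1) or
   type-2 (trained, transmissibility T2) edge with probabilities 1-q and q and summing
   over the split by the binomial theorem, the bivariate generating functions collapse
   to the univariate ones, F0 x = sum Q k x^k and G0 x = sum P k x^k, evaluated at
   1 + (u-1) T(q), where T(q) = (1-q) T1 + q T2 is the effective transmissibility.
   Likewise nu_tilde(q) = T(q) * sum m Q(m), which gives part (ii) since T' = T2-T1 < 0.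
   For part (i), psi(q) = N(T(q)) where N(T) is the probability that a node avoids the
   outbreak at transmissibility T.  Writing s = (1-u) T, a fixed point u < 1 of
   u = F0(1 + (u-1)T) is the same as a solution of T R(s) = 1, where
   R(s) = (1 - F0(1-s))/s is strictly decreasing as soon as some Q k > 0 with k >= 2.
   Hence near a transmissibility with N(T) < 1 we have N(T) = G0(1 - R^-1(1/T)), and
   the inverse function theorem and the chain rule show N'(T) < 0.  Composing with
   the decreasing map q -> T(q) gives psi'(q) > 0.  The file first proves the binomial
   collapse, then develops F0, R and N in a locale for a degree distribution, and
   finally derives the theorem. *)

section \<open>Binomial collapse of double sums\<close>

lemma sum_box_by_total_degree:
  fixes f :: "nat \<Rightarrow> nat \<Rightarrow> real"
  assumes "\<And>i j. n < i + j \<Longrightarrow> f i j = 0"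
  shows "(\<Sum>i\<le>n. \<Sum>j\<le>n. f i j) = (\<Sum>k\<le>n. \<Sum>i\<le>k. f i (k - i))"
proof -
  have "(\<Sum>i\<le>n. \<Sum>j\<le>n. f i j) = (\<Sum>(i,j)\<in>{..n}\<times>{..n}. f i j)"
    by (simp add: sum.cartesian_product)
  also have "\<dots> = (\<Sum>(i,j)\<in>{(i,j). i + j \<le> n}. f i j)"
    by (rule sum.mono_neutral_right) (use assms in \<open>auto simp: not_le[symmetric]\<close>)
  also have "\<dots> = (\<Sum>k\<le>n. \<Sum>i\<le>k. f i (k - i))"
    by (rule sum.triangle_reindex_eq)
  finally show ?thesis .
qed

lemma binomial_collapse:
  fixes c :: "nat \<Rightarrow> real" and a b :: real
  assumes "\<And>k. n < k \<Longrightarrow> c k = 0"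
  shows "(\<Sum>k1\<le>n. \<Sum>k2\<le>n. real ((k1 + k2) choose k2) * a^k1 * b^k2 * c (k1 + k2))
       = (\<Sum>k\<le>n. c k * (a + b)^k)"
proof -
  have "(\<Sum>k1\<le>n. \<Sum>k2\<le>n. real ((k1 + k2) choose k2) * a^k1 * b^k2 * c (k1 + k2))
      = (\<Sum>k\<le>n. \<Sum>i\<le>k. real ((i + (k - i)) choose (k - i)) * a^i * b^(k - i) * c (i + (k - i)))"
    by (rule sum_box_by_total_degree) (use assms in auto)
  also have "\<dots> = (\<Sum>k\<le>n. c k * (\<Sum>i\<le>k. real (k choose i) * a^i * b^(k - i)))"
    by (intro sum.cong refl)
      (auto simp: sum_distrib_left binomial_symmetric[symmetric] intro!: sum.cong)
  also have "\<dots> = (\<Sum>k\<le>n. c k * (a + b)^k)"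
    by (simp add: binomial_ring)
  finally show ?thesis .
qed

lemma binomial_first_moment:
  fixes a b :: real
  shows "(\<Sum>i\<le>k. real i * (real (k choose i) * a^i * b^(k - i))) = real k * a * (a + b)^(k - 1)"
proof (cases k)
  case 0
  then show ?thesis by simp
next
  case (Suc n)
  have absorb: "real (Suc i) * real (Suc n choose Suc i) = real (Suc n) * real (n choose i)" for i
    using Suc_times_binomial_eq[of n i] by (metis of_nat_mult mult.commute)
  have "(\<Sum>i\<le>Suc n. real i * (real (Suc n choose i) * a^i * b^(Suc n - i)))
      = (\<Sum>i\<le>n. (real (Suc i) * real (Suc n choose Suc i)) * a * (a^i * b^(n - i)))"
    by (subst sum.atMost_Suc_shift) (simp add: algebra_simps)
  also have "\<dots> = (\<Sum>i\<le>n. real (Suc n) * a * (real (n choose i) * a^i * b^(n - i)))"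
    unfolding absorb by (simp add: algebra_simps)
  also have "\<dots> = real (Suc n) * a * (a + b)^n"
    by (simp add: binomial_ring sum_distrib_left)
  finally show ?thesis using Suc by simp
qed

text \<open>A fraction \<open>q\<close> of the edges are trained and transmit with probability \<open>T2\<close>,
  the others with probability \<open>T1\<close>.\<close>
definition eff_trans :: "real \<Rightarrow> real \<Rightarrow> real \<Rightarrow> real" where
  "eff_trans T1 T2 q = (1 - q) * T1 + q * T2"

lemma eff_trans_deriv: "(eff_trans T1 T2 has_real_derivative T2 - T1) (at q)"
  unfolding eff_trans_def by (auto intro!: derivative_eq_intros)

lemma eff_trans_bounds:
  assumes "0 < T1" "T1 < 1" "0 < T2" "T2 < 1" "0 \<le> q" "q \<le> 1"
  shows "0 < eff_trans T1 T2 q" "eff_trans T1 T2 q < 1"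
proof -
  have "0 \<le> (1 - q) * T1" "0 \<le> q * T2" using assms by simp_all
  moreover have "0 < (1 - q) * T1 \<or> 0 < q * T2"
    using assms by (cases "q = 1") auto
  ultimately show "0 < eff_trans T1 T2 q" unfolding eff_trans_def by linarith
  have "(1 - q) * T1 \<le> 1 - q" "q * T2 \<le> q" using assms by (simp_all add: mult_left_le)
  moreover have "(1 - q) * T1 < 1 - q \<or> q * T2 < q"
    using assms by (cases "q = 1") auto
  ultimately show "eff_trans T1 T2 q < 1" unfolding eff_trans_def by linarith
qed

section \<open>Generating functions of a degree distribution\<close>

locale degree_distribution =
  fixes P :: "nat \<Rightarrow> real" and kmax :: nat
  assumes P_nonneg: "\<And>k. P k \<ge> 0"
    and P_supp: "\<And>k. k > kmax \<Longrightarrow> P k = 0"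
    and P_sum: "(\<Sum>k\<le>kmax. P k) = 1"
    and mean_pos: "meandeg P kmax > 0"
begin

abbreviation Q :: "nat \<Rightarrow> real" where
  "Q \<equiv> Qd P kmax"

definition F0 :: "real \<Rightarrow> real" where
  "F0 x = (\<Sum>k\<le>kmax. Q k * x^k)"

definition G0 :: "real \<Rightarrow> real" where
  "G0 x = (\<Sum>k\<le>kmax. P k * x^k)"

definition G0' :: "real \<Rightarrow> real" where
  "G0' x = (\<Sum>k\<le>kmax. P k * (real k * x^(k - Suc 0)))"

definition mean_Q :: real where
  "mean_Q = (\<Sum>m\<le>kmax. real m * Q m)"

lemma Q_supp: "k > kmax \<Longrightarrow> Q k = 0"
  by (simp add: Qd_def P_supp)

lemma Q_nonneg: "Q k \<ge> 0"
  using mean_pos P_nonneg by (simp add: Qd_def)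

lemma Q_sum: "(\<Sum>k\<le>kmax. Q k) = 1"
proof -
  have "(\<Sum>k\<le>kmax. real (k + 1) * P (k + 1)) = (\<Sum>k\<le>Suc kmax. real k * P k)"
    by (subst sum.atMost_Suc_shift) simp
  also have "\<dots> = meandeg P kmax"
    by (simp add: meandeg_def P_supp)
  finally show ?thesis
    using mean_pos by (simp add: Qd_def sum_divide_distrib[symmetric])
qed

lemma G0_one: "G0 1 = 1"
  using P_sum by (simp add: G0_def)

lemma G0_deriv: "(G0 has_real_derivative G0' x) (at x)"
  unfolding G0_def G0'_def by (intro DERIV_sum DERIV_cmult DERIV_pow)

text \<open>\<open>G0\<close> is strictly increasing on the positive axis, because the mean degree is positive.\<close>
lemma G0'_pos:
  assumes "0 < x"
  shows "0 < G0' x"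
proof -
  obtain k where k: "k \<le> kmax" "0 < real k * P k"
  proof -
    have "\<not> (\<forall>k\<in>{..kmax}. real k * P k \<le> 0)"
      using mean_pos sum_nonpos[of "{..kmax}" "\<lambda>k. real k * P k"] by (auto simp: meandeg_def)
    then show ?thesis using that by force
  qed
  show ?thesis unfolding G0'_def
  proof (rule sum_pos2[of _ k])
    show "0 < P k * (real k * x ^ (k - Suc 0))"
      using k assms by (simp add: mult.assoc[symmetric] mult.commute[of "P k"])
    show "\<And>i. i \<in> {..kmax} \<Longrightarrow> 0 \<le> P i * (real i * x ^ (i - Suc 0))"
      using assms P_nonneg by (intro mult_nonneg_nonneg) auto
  qed (use k in auto)
qed

lemma Fq_eq: "Fq P kmax T1 T2 q u = F0 (1 + (u - 1) * eff_trans T1 T2 q)"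
proof -
  have "Fq P kmax T1 T2 q u = (\<Sum>k1\<le>kmax. \<Sum>k2\<le>kmax. real ((k1 + k2) choose k2)
       * ((1 - q) * (1 + (u - 1) * T1))^k1 * (q * (1 + (u - 1) * T2))^k2 * Q (k1 + k2))"
    unfolding Fq_def Qq_def by (intro sum.cong refl) (simp add: power_mult_distrib mult_ac)
  also have "\<dots> = (\<Sum>k\<le>kmax. Q k * ((1 - q) * (1 + (u - 1) * T1) + q * (1 + (u - 1) * T2))^k)"
    by (rule binomial_collapse) (rule Q_supp)
  finally show ?thesis
    by (simp add: F0_def eff_trans_def algebra_simps)
qed

lemma Gq_eq: "Gq P kmax T1 T2 q u = G0 (1 + (u - 1) * eff_trans T1 T2 q)"
proof -
  have "Gq P kmax T1 T2 q u = (\<Sum>k1\<le>kmax. \<Sum>k2\<le>kmax. real ((k1 + k2) choose k2)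
       * ((1 - q) * (1 + (u - 1) * T1))^k1 * (q * (1 + (u - 1) * T2))^k2 * P (k1 + k2))"
    unfolding Gq_def Pq_def by (intro sum.cong refl) (simp add: power_mult_distrib mult_ac)
  also have "\<dots> = (\<Sum>k\<le>kmax. P k * ((1 - q) * (1 + (u - 1) * T1) + q * (1 + (u - 1) * T2))^k)"
    by (rule binomial_collapse) (rule P_supp)
  finally show ?thesis
    by (simp add: G0_def eff_trans_def algebra_simps)
qed

text \<open>The mean number of type-1 edges of an excess-degree node is \<open>(1-q) mean_Q\<close> and that
  of both types together is \<open>mean_Q\<close>; hence the transmission rate is linear in \<open>q\<close>.\<close>
lemma nu_tilde_eq: "nu_tilde P kmax T1 T2 q = eff_trans T1 T2 q * mean_Q"
proof -
  define A where "A = (\<Sum>k1\<le>kmax. \<Sum>k2\<le>kmax. real k1 * Qq P kmax q k1 k2)"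
  define B where "B = (\<Sum>k1\<le>kmax. \<Sum>k2\<le>kmax. real k2 * Qq P kmax q k1 k2)"
  have "A = (\<Sum>k\<le>kmax. \<Sum>i\<le>k. real i * Qq P kmax q i (k - i))"
    unfolding A_def by (rule sum_box_by_total_degree) (simp add: Qq_def Q_supp)
  also have "\<dots> = (\<Sum>k\<le>kmax. Q k * (\<Sum>i\<le>k. real i * (real (k choose i) * (1 - q)^i * q^(k - i))))"
    by (intro sum.cong refl)
      (auto simp: Qq_def sum_distrib_left binomial_symmetric[symmetric] mult_ac intro!: sum.cong)
  also have "\<dots> = (\<Sum>k\<le>kmax. Q k * (real k * (1 - q)))"
    by (simp add: binomial_first_moment)
  also have "\<dots> = (1 - q) * mean_Q"
    by (simp add: mean_Q_def sum_distrib_left mult_ac)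
  finally have A: "A = (1 - q) * mean_Q" .
  have "A + B = (\<Sum>k1\<le>kmax. \<Sum>k2\<le>kmax. real ((k1 + k2) choose k2) * (1 - q)^k1 * q^k2
                  * (real (k1 + k2) * Q (k1 + k2)))"
    unfolding A_def B_def sum.distrib[symmetric]
    by (intro sum.cong refl) (simp add: Qq_def algebra_simps)
  also have "\<dots> = (\<Sum>k\<le>kmax. (real k * Q k) * ((1 - q) + q)^k)"
    by (rule binomial_collapse) (simp add: Q_supp)
  also have "\<dots> = mean_Q" by (simp add: mean_Q_def)
  finally have B: "B = q * mean_Q" using A by (simp add: algebra_simps)
  have "nu_tilde P kmax T1 T2 q = T1 * A + T2 * B"
    unfolding nu_tilde_def A_def B_def ..
  then show ?thesis
    using A B by (simp add: eff_trans_def algebra_simps)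
qed

section \<open>The fixed-point equation\<close>

lemma F0_one: "F0 1 = 1"
  using Q_sum by (simp add: F0_def)

lemma F0_nonneg: "0 \<le> x \<Longrightarrow> 0 \<le> F0 x"
  unfolding F0_def by (intro sum_nonneg mult_nonneg_nonneg Q_nonneg zero_le_power)

text \<open>The difference quotient \<open>R s = (1 - F0 (1 - s)) / s\<close>, written as a polynomial so that
  it is also defined at \<open>s = 0\<close>, and its derivative.\<close>
definition R :: "real \<Rightarrow> real" where
  "R s = (\<Sum>k\<le>kmax. Q k * (\<Sum>j<k. (1 - s)^j))"

definition R' :: "real \<Rightarrow> real" where
  "R' s = (\<Sum>k\<le>kmax. Q k * (\<Sum>j<k. - (real j * (1 - s)^(j - Suc 0))))"

lemma one_minus_F0: "1 - F0 (1 - s) = s * R s"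
proof -
  have "1 - F0 (1 - s) = (\<Sum>k\<le>kmax. Q k * (1 - (1 - s)^k))"
    using Q_sum by (simp add: F0_def sum_subtractf right_diff_distrib)
  also have "\<dots> = (\<Sum>k\<le>kmax. s * (Q k * (\<Sum>j<k. (1 - s)^j)))"
    by (intro sum.cong refl) (simp add: one_diff_power_eq)
  finally show ?thesis by (simp add: R_def sum_distrib_left)
qed

lemma R_deriv: "(R has_real_derivative R' s) (at s)"
proof -
  have "((\<lambda>s. (1 - s)^j) has_real_derivative - (real j * (1 - s)^(j - Suc 0))) (at s)" for j
    by (auto intro!: derivative_eq_intros)
  then show ?thesis
    unfolding R_def R'_def by (intro DERIV_sum DERIV_cmult)
qed

lemma R_cont: "isCont R s"
  using R_deriv DERIV_isCont by blast

text \<open>The offspring distribution is branching if some excess degree \<open>k \<ge> 2\<close> occurs.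
  Otherwise \<open>R \<le> 1\<close>, and no transmissibility below 1 admits a nontrivial fixed point.\<close>
definition branching :: bool where
  "branching \<longleftrightarrow> (\<exists>k. 2 \<le> k \<and> k \<le> kmax \<and> 0 < Q k)"

lemma R_le_one_if_not_branching:
  assumes "\<not> branching"
  shows "R s \<le> 1"
proof -
  have "Q k * (\<Sum>j<k. (1 - s)^j) \<le> Q k" if "k \<le> kmax" for k
  proof (cases "2 \<le> k")
    case True
    then have "Q k = 0" using assms Q_nonneg[of k] that by (force simp: branching_def)
    then show ?thesis by simp
  next
    case False
    then have "k = 0 \<or> k = 1" by auto
    then show ?thesis using Q_nonneg[of k] by auto
  qed
  then have "R s \<le> (\<Sum>k\<le>kmax. Q k)"
    unfolding R_def by (intro sum_mono) auto
  then show ?thesis using Q_sum by simp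
qed

lemma R'_neg:
  assumes branching and s: "0 \<le> s" "s \<le> 1"
  shows "R' s < 0"
proof -
  obtain k where k: "2 \<le> k" "k \<le> kmax" "0 < Q k"
    using \<open>branching\<close> by (auto simp: branching_def)
  have "0 < (\<Sum>k\<le>kmax. Q k * (\<Sum>j<k. real j * (1 - s)^(j - Suc 0)))"
  proof (rule sum_pos2[of _ k])
    show "0 < Q k * (\<Sum>j<k. real j * (1 - s)^(j - Suc 0))"
      by (intro mult_pos_pos k(3) sum_pos2[of _ 1]) (use k s in auto)
    show "\<And>i. i \<in> {..kmax} \<Longrightarrow> 0 \<le> Q i * (\<Sum>j<i. real j * (1 - s)^(j - Suc 0))"
      using s by (intro mult_nonneg_nonneg Q_nonneg sum_nonneg) auto
  qed (use k in auto)
  then show ?thesis by (simp add: R'_def sum_negf)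
qed

lemma R_strict_decreasing:
  assumes branching and "0 \<le> s" "s < t" "t \<le> 1"
  shows "R t < R s"
  by (rule DERIV_neg_imp_decreasing[OF \<open>s < t\<close>]) (use assms R_deriv R'_neg in force)

lemma R_inj:
  assumes branching
  shows "inj_on R {0..1}"
proof (rule inj_onI)
  fix x y :: real
  assume "x \<in> {0..1}" "y \<in> {0..1}" "R x = R y"
  then show "x = y"
    using R_strict_decreasing[OF assms, of x y] R_strict_decreasing[OF assms, of y x]
    by (cases x y rule: linorder_cases) auto
qed

lemma fixpoint_iff: "u = F0 (1 + (u - 1) * T) \<longleftrightarrow> u = 1 \<or> T * R ((1 - u) * T) = 1"
proof -
  have "F0 (1 + (u - 1) * T) = 1 - (1 - u) * T * R ((1 - u) * T)"
    using one_minus_F0[of "(1 - u) * T"] by (simp add: algebra_simps)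
  then have "u = F0 (1 + (u - 1) * T) \<longleftrightarrow> (1 - u) * (1 - T * R ((1 - u) * T)) = 0"
    by (auto simp: algebra_simps)
  then show ?thesis by auto
qed

definition fixpoints :: "real \<Rightarrow> real set" where
  "fixpoints T = {u \<in> {0..1}. u = F0 (1 + (u - 1) * T)}"

definition nonoutbreak :: "real \<Rightarrow> real" where
  "nonoutbreak T = G0 (1 + (Inf (fixpoints T) - 1) * T)"

lemma psi_eq: "psi P kmax T1 T2 q = nonoutbreak (eff_trans T1 T2 q)"
  unfolding psi_def ustar_def Gq_eq Fq_eq fixpoints_def nonoutbreak_def by simp

lemma fixpoints_Inf:
  assumes branching and T: "0 < T" "T < 1" and s: "0 < s" "s < 1" and eq: "T * R s = 1"
  shows "Inf (fixpoints T) = 1 - s / T"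
proof -
  have "s * R s \<le> 1"
    using one_minus_F0[of s] F0_nonneg[of "1 - s"] s by simp
  then have "s * (T * R s) \<le> T"
    using T by (simp add: mult_left_mono mult.left_commute)
  then have "s \<le> T" using eq by simp
  define u0 where "u0 = 1 - s / T"
  have u0: "0 \<le> u0" "u0 < 1" using \<open>s \<le> T\<close> T s by (auto simp: u0_def field_simps)
  have s_u0: "(1 - u0) * T = s" using T by (simp add: u0_def)
  have "u = u0" if u: "u \<in> fixpoints T" "u \<noteq> 1" for u
  proof -
    have u01: "0 \<le> u" "u \<le> 1" using u by (auto simp: fixpoints_def)
    have "T * R ((1 - u) * T) = T * R s"
      using u fixpoint_iff eq by (auto simp: fixpoints_def)
    then have "R ((1 - u) * T) = R s" using T by simp
    moreover have "(1 - u) * T \<in> {0..1}"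
      using u01 T mult_left_le[of T "1 - u"] by (auto simp: mult.commute)
    ultimately have "(1 - u) * T = s"
      using s inj_onD[OF R_inj[OF \<open>branching\<close>]] by auto
    then show ?thesis using s_u0 T by auto
  qed
  moreover have "{u0, 1} \<subseteq> fixpoints T"
    using u0 s_u0 eq fixpoint_iff[of u0 T] fixpoint_iff[of 1 T] by (auto simp: fixpoints_def)
  ultimately have "fixpoints T = {u0, 1}" by blast
  then show ?thesis using u0 by (simp add: u0_def cInf_insert inf_absorb1)
qed

lemma nontrivial_fixpoint:
  assumes T: "0 < T" "T < 1" and below: "nonoutbreak T < 1"
  obtains s where "0 < s" "s < 1" "T * R s = 1"
proof -
  have one: "1 \<in> fixpoints T" using F0_one by (simp add: fixpoints_def)
  have bdd: "bdd_below (fixpoints T)" by (rule bdd_belowI[of _ 0]) (auto simp: fixpoints_def)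
  have "Inf (fixpoints T) \<noteq> 1"
    using below G0_one by (auto simp: nonoutbreak_def)
  then have "Inf (fixpoints T) < 1"
    using cInf_lower[OF one bdd] by simp
  then obtain u where u: "u \<in> fixpoints T" "u < 1"
    using cInf_lessD one by blast
  then have "0 \<le> u" "T * R ((1 - u) * T) = 1"
    using fixpoint_iff[of u T] by (auto simp: fixpoints_def)
  moreover have "(1 - u) * T \<le> T"
    using \<open>0 \<le> u\<close> T mult_left_le[of "1 - u" T] by (simp add: mult.commute)
  moreover have "0 < (1 - u) * T" using u T by simp
  ultimately show ?thesis
    using that[of "(1 - u) * T"] T by linarith
qed

section \<open>Local inversion and monotonicity in the transmissibility\<close>

definition R_inv :: "real \<Rightarrow> real" where
  "R_inv = the_inv_into {0..1} R"

lemma R_inv_R: "branching \<Longrightarrow> s \<in> {0..1} \<Longrightarrow> R_inv (R s) = s"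
  unfolding R_inv_def by (rule the_inv_into_f_f[OF R_inj])

lemma R_attains:
  assumes "R 1 < y" "y < R 0"
  obtains s where "0 < s" "s < 1" "R s = y"
proof -
  obtain s where "0 \<le> s" "s \<le> 1" "R s = y"
    using IVT2[of R 1 y 0] assms R_cont by force
  moreover have "s \<noteq> 0" "s \<noteq> 1" using assms \<open>R s = y\<close> by auto
  ultimately show ?thesis by (auto intro!: that simp: less_le)
qed

lemma R_inv_deriv:
  assumes branching and "0 < s" "s < 1"
  shows "(R_inv has_real_derivative inverse (R' s)) (at (R s))"
proof (rule has_field_derivative_inverse_strong[where S = "{0<..<1}" and f = R and x = s])
  show "(R has_real_derivative R' s) (at s)" by (rule R_deriv)
  show "R' s \<noteq> 0" using R'_neg[OF assms(1), of s] assms by simp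
  show "continuous_on {0<..<1} R" by (intro continuous_at_imp_continuous_on ballI R_cont)
  show "\<And>z. z \<in> {0<..<1} \<Longrightarrow> R_inv (R z) = z" using R_inv_R[OF assms(1)] by auto
qed (use assms in auto)

lemma nonoutbreak_by_R_inv:
  assumes branching and T: "0 < T" "T < 1" and window: "R 1 < inverse T" "inverse T < R 0"
  shows "nonoutbreak T = G0 (1 - R_inv (inverse T))"
proof -
  obtain s where s: "0 < s" "s < 1" "R s = inverse T"
    using R_attains window by blast
  then have "R_inv (inverse T) = s"
    using R_inv_R[OF \<open>branching\<close>, of s] by auto
  moreover have "Inf (fixpoints T) = 1 - s / T"
    using fixpoints_Inf[OF \<open>branching\<close> T s(1,2)] s(3) T by simp
  then have "1 + (Inf (fixpoints T) - 1) * T = 1 - s"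
    using T by simp
  ultimately show ?thesis
    by (simp add: nonoutbreak_def)
qed

text \<open>The window condition of the previous lemma is open, so the representation holds on a
  neighbourhood.\<close>
lemma nonoutbreak_near_R_inv:
  assumes branching and T0: "0 < T0" "T0 < 1" and window: "R 1 < inverse T0" "inverse T0 < R 0"
  shows "eventually (\<lambda>T. G0 (1 - R_inv (inverse T)) = nonoutbreak T) (nhds T0)"
proof -
  have lim_id: "((\<lambda>T. T) \<longlongrightarrow> T0) (nhds T0)" by (rule filterlim_ident)
  have lim_inv: "((\<lambda>T. inverse T) \<longlongrightarrow> inverse T0) (nhds T0)"
    using tendsto_inverse[OF lim_id] T0 by simp
  have "eventually (\<lambda>T. 0 < T \<and> T < 1 \<and> R 1 < inverse T \<and> inverse T < R 0) (nhds T0)"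
    using order_tendstoD[OF lim_id] order_tendstoD[OF lim_inv] T0 window
    by (auto intro!: eventually_conj)
  then show ?thesis
    by (rule eventually_mono) (use nonoutbreak_by_R_inv[OF \<open>branching\<close>] in auto)
qed

lemma nonoutbreak_deriv_neg:
  assumes T0: "0 < T0" "T0 < 1" and below: "nonoutbreak T0 < 1"
  obtains D where "D < 0" "(nonoutbreak has_real_derivative D) (at T0)"
proof -
  obtain s0 where s0: "0 < s0" "s0 < 1" "T0 * R s0 = 1"
    using nontrivial_fixpoint T0 below by blast
  \<comment> \<open>\<open>T0 R(s0) = 1\<close> with \<open>T0 < 1\<close> forces \<open>R(s0) > 1\<close>, so the distribution is branching\<close>
  have "\<not> R s0 \<le> 1"
    using s0(3) T0 mult_left_le[of "R s0" T0] by auto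
  then have branching
    using R_le_one_if_not_branching by blast
  have R_s0: "R s0 = inverse T0"
    using s0(3) T0 by (simp add: field_simps)
  have window: "R 1 < inverse T0" "inverse T0 < R 0"
    using R_strict_decreasing[OF \<open>branching\<close>] s0 R_s0 by (metis less_eq_real_def order_refl)+
  have R_inv_T0: "R_inv (inverse T0) = s0"
    using R_inv_R[OF \<open>branching\<close>, of s0] s0 R_s0 by simp
  have d_inv: "((\<lambda>T. R_inv (inverse T)) has_real_derivative
      inverse (R' s0) * - (inverse T0 ^ 2)) (at T0)"
    using DERIV_chain2[OF R_inv_deriv[OF \<open>branching\<close> s0(1,2), unfolded R_s0] DERIV_inverse[of T0]] T0
    by (simp add: power2_eq_square)
  define D where "D = G0' (1 - s0) * - (inverse (R' s0) * - (inverse T0 ^ 2))"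
  have "((\<lambda>T. G0 (1 - R_inv (inverse T))) has_real_derivative D) (at T0)"
    unfolding D_def
    using DERIV_chain2[OF G0_deriv DERIV_diff[OF DERIV_const d_inv]] by (simp add: R_inv_T0)
  then have "(nonoutbreak has_real_derivative D) (at T0)"
    using DERIV_cong_ev[OF refl nonoutbreak_near_R_inv[OF \<open>branching\<close> T0 window] refl] by blast
  moreover have "D < 0"
  proof -
    have "R' s0 < 0" using R'_neg[OF \<open>branching\<close>] s0 by simp
    then have "0 < inverse (R' s0) * - (inverse T0 ^ 2)"
      using T0 by (simp add: mult_neg_pos)
    then show ?thesis
      using G0'_pos[of "1 - s0"] s0 by (simp add: D_def mult_pos_neg)
  qed
  ultimately show ?thesis using that by blast
qed

end

theorem theorem2:
  fixes P :: "nat \<Rightarrow> real" and kmax :: nat and T1 T2 :: real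
  assumes P_nonneg: "\<And>k. P k \<ge> 0"
    and P_supp: "\<And>k. k > kmax \<Longrightarrow> P k = 0"
    and P_sum: "(\<Sum>k\<le>kmax. P k) = 1"
    and mean_pos: "meandeg P kmax > 0"
    and T2_pos: "0 < T2" and T21: "T2 < T1" and T1_lt: "T1 < 1"
    and Qmean_pos: "(\<Sum>m\<le>kmax. real m * Qd P kmax m) > 0"
  shows "(\<forall>q\<in>{0..1}. 0 < psi P kmax T1 T2 q \<and> psi P kmax T1 T2 q < 1 \<longrightarrow>
            (\<exists>D. (psi P kmax T1 T2 has_real_derivative D) (at q within {0..1}) \<and> D > 0))
       \<and> (\<forall>q\<in>{0..1}. \<exists>D. (nu_tilde P kmax T1 T2 has_real_derivative D) (at q within {0..1}) \<and> D < 0)"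
proof -
  interpret degree_distribution P kmax
    using P_nonneg P_supp P_sum mean_pos by unfold_locales
  have psi_increasing: "\<exists>D. (psi P kmax T1 T2 has_real_derivative D) (at q within {0..1}) \<and> D > 0"
    if q: "q \<in> {0..1}" "psi P kmax T1 T2 q < 1" for q
  proof -
    let ?T = "eff_trans T1 T2 q"
    have "0 < ?T" "?T < 1" "nonoutbreak ?T < 1"
      using eff_trans_bounds[of T1 T2 q] q T2_pos T21 T1_lt by (auto simp: psi_eq)
    then obtain D where "D < 0" "(nonoutbreak has_real_derivative D) (at ?T)"
      using nonoutbreak_deriv_neg by blast
    then have "((\<lambda>q. nonoutbreak (eff_trans T1 T2 q)) has_real_derivative D * (T2 - T1))
        (at q within {0..1})"
      by (intro DERIV_chain2[OF _ has_field_derivative_at_within[OF eff_trans_deriv]])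
    moreover have "0 < D * (T2 - T1)" using \<open>D < 0\<close> T21 by (simp add: mult_neg_neg)
    ultimately show ?thesis by (auto simp: psi_eq[abs_def])
  qed
  have nu_decreasing: "(nu_tilde P kmax T1 T2 has_real_derivative (T2 - T1) * mean_Q)
      (at q within {0..1})" for q
    unfolding nu_tilde_eq[abs_def]
    by (intro DERIV_cmult_right has_field_derivative_at_within[OF eff_trans_deriv])
  have "(T2 - T1) * mean_Q < 0"
    using Qmean_pos T21 by (simp add: mean_Q_def mult_neg_pos)
  then show ?thesis using psi_increasing nu_decreasing by blast
qed

end
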